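(* Let $L$ be an oriented, ordered virtual link diagram with affine bilabeling $C$. Let $L_i$ be a component of weight $n$ whose starting point $s$ carries bilabel $(a_1,a_2)$. Let $c$ be the first classical crossing met by $L_i$ after $s$ (in the direction of orientation), and suppose $c$ is an external crossing. Let $\iota\in\{\pm1\}$ be the index change of $L_i$'s passage through $c$. Let $C'$ be the bilabeling obtained by moving the starting point of $L_i$ forward to a point $s'$ just past $c$, still with starting bilabel $(a_1,a_2)$, and keeping everything else the same. Then: - the weight of $c$ changes by $+(n-\iota)$ if $L_i$ is the overstrand at $c$, and by $-(n-\iota)$ if $L_i$ is the understrand at $c$, i.e. $W_{C'}(c)=W_C(c)\pm(n-\iota)$; and - all other labels of $L_i$ (those not on the segment between $s$ and $s'$) shift by $-\iota$.
   Context: **Diagrams.** A virtual link diagram is an oriented planar diagram of ordered closed curves $L_1,\dots,L_n$ (components) with classical and virtual crossings. **Crossing conventions.** Draw a classical crossing with both strands oriented upward. - The bottom-left-to-top-right strand has index change $-1$; the bottom-right-to-top-left strand has index change $+1$. - The crossing is positive if the overstrand is the bottom-left-to-top-right strand, and negative otherwise. - Self-crossings have both strands on one component; external crossings have strands on different components. - The weight of a component $L_i$ is the sum of the index changes of $L_i$ over its passages through external classical crossings. **Affine bilabeling.** - Each component gets a starting point with bilabel $(a^{(i)}_1,a^{(i)}_2)$ of formal integer variables. - The bilabel is carried along the component in its orientation and is unchanged at virtual crossings. - At a classical crossing with index change $\varepsilon$, the first entry changes by $\varepsilon$ if the crossing is a self-crossing, and the second entry changes by $\varepsilon$ if external. -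 On returning to the starting point, the label is off by the component's weight in the second entry; this discrepancy is placed at the starting point. **Crossing weight.** For $|(x,y)|=x+y$ and $c$ drawn with both strands upward: - if $c$ is positive, $W(c)=|\text{bottom-left}|-|\text{top-left}|$; - if $c$ is negative, $W(c)=|\text{bottom-right}|-|\text{top-right}|$. Weights are computed with the labels as integer linear expressions in the same formal variables. *)

theory Defs
  imports Main
begin

text \<open>
Combinatorial (Gauss-diagram) model of an oriented, ordered virtual link diagram.
Component j is described by the list D j of its passages through classical crossings,
read in the direction of orientation starting from its starting point; a passage is a
pair (c, e) where c is the crossing and e is the index change of that passage:
e = -1 for the bottom-left-to-top-right strand and e = 1 for the bottom-right-to-top-left
strand.  Virtual crossings do not affect anything and are not recorded.
pos c holds iff c is a positive crossing, i.e. the overstrand is the strand with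
index change -1.
\<close>

definition wf_diagram :: "nat \<Rightarrow> 'c set \<Rightarrow> (nat \<Rightarrow> ('c \<times> int) list) \<Rightarrow> bool" where
  "wf_diagram N Cr D \<longleftrightarrow> finite Cr
     \<and> (\<forall>j<N. \<forall>p\<in>set (D j). fst p \<in> Cr \<and> snd p \<in> {-1, 1})
     \<and> (\<forall>c\<in>Cr. \<forall>e\<in>{-1, 1::int}. \<exists>!jk. fst jk < N \<and> snd jk < length (D (fst jk))
                                     \<and> D (fst jk) ! snd jk = (c, e))"

definition passage_loc :: "nat \<Rightarrow> (nat \<Rightarrow> ('c \<times> int) list) \<Rightarrow> 'c \<Rightarrow> int \<Rightarrow> nat \<times> nat" where
  "passage_loc N D c e = (THE jk. fst jk < N \<and> snd jk < length (D (fst jk))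
                                   \<and> D (fst jk) ! snd jk = (c, e))"

definition is_self :: "(nat \<Rightarrow> ('c \<times> int) list) \<Rightarrow> nat \<Rightarrow> 'c \<times> int \<Rightarrow> bool" where
  "is_self D i p \<longleftrightarrow> (fst p, - snd p) \<in> set (D i)"

definition self_contrib :: "(nat \<Rightarrow> ('c \<times> int) list) \<Rightarrow> nat \<Rightarrow> 'c \<times> int \<Rightarrow> int" where
  "self_contrib D i p = (if is_self D i p then snd p else 0)"

definition ext_contrib :: "(nat \<Rightarrow> ('c \<times> int) list) \<Rightarrow> nat \<Rightarrow> 'c \<times> int \<Rightarrow> int" where
  "ext_contrib D i p = (if is_self D i p then 0 else snd p)"

definition comp_weight :: "(nat \<Rightarrow> ('c \<times> int) list) \<Rightarrow> nat \<Rightarrow> int" where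
  "comp_weight D i = sum_list (map (ext_contrib D i) (D i))"

text \<open>Affine bilabel of segment k of component i, where the starting bilabels are a j
(formal variables, modelled as arbitrary integers).  Segment k (0 \<le> k \<le> length (D i)) is
the arc after the first k passages: segment 0 starts at the starting point, segment k
is the incoming arc of passage k and the outgoing arc of passage k-1, and the last
segment length (D i) ends at the starting point (it carries the weight discrepancy).\<close>
definition bilabel :: "(nat \<Rightarrow> ('c \<times> int) list) \<Rightarrow> (nat \<Rightarrow> int \<times> int) \<Rightarrow> nat \<Rightarrow> nat \<Rightarrow> int \<times> int" where
  "bilabel D a i k =
     (fst (a i) + sum_list (map (self_contrib D i) (take k (D i))),
      snd (a i) + sum_list (map (ext_contrib D i) (take k (D i))))"

definition lab_abs :: "int \<times> int \<Rightarrow> int" where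
  "lab_abs l = fst l + snd l"

definition in_label :: "nat \<Rightarrow> (nat \<Rightarrow> ('c \<times> int) list) \<Rightarrow> (nat \<Rightarrow> int \<times> int) \<Rightarrow> 'c \<Rightarrow> int \<Rightarrow> int \<times> int" where
  "in_label N D a c e = (case passage_loc N D c e of (j, k) \<Rightarrow> bilabel D a j k)"

definition out_label :: "nat \<Rightarrow> (nat \<Rightarrow> ('c \<times> int) list) \<Rightarrow> (nat \<Rightarrow> int \<times> int) \<Rightarrow> 'c \<Rightarrow> int \<Rightarrow> int \<times> int" where
  "out_label N D a c e = (case passage_loc N D c e of (j, k) \<Rightarrow> bilabel D a j (Suc k))"

text \<open>Crossing weight: bottom-left = incoming arc of strand -1, top-left = outgoing arc of
strand 1, bottom-right = incoming arc of strand 1, top-right = outgoing arc of strand -1.\<close>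
definition crossing_weight :: "nat \<Rightarrow> (nat \<Rightarrow> ('c \<times> int) list) \<Rightarrow> ('c \<Rightarrow> bool) \<Rightarrow> (nat \<Rightarrow> int \<times> int) \<Rightarrow> 'c \<Rightarrow> int" where
  "crossing_weight N D pos a c =
     (if pos c then lab_abs (in_label N D a c (-1)) - lab_abs (out_label N D a c 1)
      else lab_abs (in_label N D a c 1) - lab_abs (out_label N D a c (-1)))"

definition is_over :: "('c \<Rightarrow> bool) \<Rightarrow> 'c \<Rightarrow> int \<Rightarrow> bool" where
  "is_over pos c e \<longleftrightarrow> (if pos c then e = -1 else e = 1)"

end

(* Moving the starting point of L_i past c rotates its list of passages by one.  Along L_i the
   second label entry accumulates the external index changes, while the first entry returns to
   its initial value because self passages cancel in pairs; so the label at the end of L_i is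
   (a1, a2 + n).  After the rotation the two arcs of L_i at c are the last two arcs of L_i, with
   labels (a1, a2 + n - iota) and (a1, a2 + n) instead of (a1, a2) and (a1, a2 + iota): both
   grow by n - iota in absolute value, the other strand at c is untouched, and W(c) changes by
   +(n - iota) or -(n - iota) according as L_i is the over- or the understrand. *)
theory Submission
  imports Defs
begin

lemma wf_diagram_distinct:
  assumes wf: "wf_diagram N Cr D" and j: "j < N"
  shows "distinct (D j)"
proof (subst distinct_conv_nth, intro allI impI)
  fix k k' assume k: "k < length (D j)" and k': "k' < length (D j)" and "k \<noteq> k'"
  show "D j ! k \<noteq> D j ! k'"
  proof
    assume eq: "D j ! k = D j ! k'"
    obtain c e where ce: "D j ! k = (c, e)" by fastforce
    then have "(c, e) \<in> set (D j)" using k by (metis nth_mem)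
    then have "\<exists>!jk. fst jk < N \<and> snd jk < length (D (fst jk)) \<and> D (fst jk) ! snd jk = (c, e)"
      using wf j unfolding wf_diagram_def by fastforce
    then have "(j, k) = (j, k')" using j k k' ce eq by auto
    with \<open>k \<noteq> k'\<close> show False by simp
  qed
qed

lemma unique_passage_iff_unique_component:
  assumes "\<forall>j<N. distinct (D j)"
  shows "(\<exists>!jk. fst jk < N \<and> snd jk < length (D (fst jk)) \<and> D (fst jk) ! snd jk = x)
     \<longleftrightarrow> (\<exists>!j. j < N \<and> x \<in> set (D j))"
proof
  assume "\<exists>!jk. fst jk < N \<and> snd jk < length (D (fst jk)) \<and> D (fst jk) ! snd jk = x"
  then obtain j k where jk: "j < N" "k < length (D j)" "D j ! k = x"
    and uniq: "\<And>j' k'. j' < N \<Longrightarrow> k' < length (D j') \<Longrightarrow> D j' ! k' = x \<Longrightarrow> (j', k') = (j, k)"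
    by fastforce
  show "\<exists>!j. j < N \<and> x \<in> set (D j)"
  proof (rule ex1I)
    show "j < N \<and> x \<in> set (D j)" using jk by auto
  next
    fix j' assume "j' < N \<and> x \<in> set (D j')"
    then show "j' = j" using uniq by (metis in_set_conv_nth prod.inject)
  qed
next
  assume "\<exists>!j. j < N \<and> x \<in> set (D j)"
  then obtain j where j: "j < N" "x \<in> set (D j)"
    and uniq: "\<And>j'. j' < N \<Longrightarrow> x \<in> set (D j') \<Longrightarrow> j' = j" by blast
  obtain k where k: "k < length (D j)" "D j ! k = x" using j(2) by (metis in_set_conv_nth)
  show "\<exists>!jk. fst jk < N \<and> snd jk < length (D (fst jk)) \<and> D (fst jk) ! snd jk = x"
  proof (rule ex1I[of _ "(j, k)"])
    fix jk assume jk: "fst jk < N \<and> snd jk < length (D (fst jk)) \<and> D (fst jk) ! snd jk = x"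
    then have "fst jk = j" using uniq nth_mem by metis
    then have "snd jk = k"
      using jk k assms j(1) by (metis nth_eq_iff_index_eq)
    with \<open>fst jk = j\<close> show "jk = (j, k)" by auto
  qed (use j k in auto)
qed

lemma wf_diagram_iff:
  "wf_diagram N Cr D \<longleftrightarrow> finite Cr
     \<and> (\<forall>j<N. distinct (D j) \<and> set (D j) \<subseteq> Cr \<times> {-1, 1})
     \<and> (\<forall>c\<in>Cr. \<forall>e\<in>{-1, 1::int}. \<exists>!j. j < N \<and> (c, e) \<in> set (D j))"
proof -
  have sets: "(\<forall>p\<in>set (D j). fst p \<in> Cr \<and> snd p \<in> {-1, 1}) \<longleftrightarrow> set (D j) \<subseteq> Cr \<times> {-1, 1}" for j
    by fastforce
  show ?thesis
  proof (cases "\<forall>j<N. distinct (D j)")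
    case True
    show ?thesis
      unfolding wf_diagram_def sets unique_passage_iff_unique_component[OF True] using True by blast
  next
    case False
    then show ?thesis using wf_diagram_distinct by blast
  qed
qed

lemma wf_diagram_rotate1:
  assumes "wf_diagram N Cr D"
  shows "wf_diagram N Cr (D(i := rotate1 (D i)))"
proof -
  have "set ((D(i := rotate1 (D i))) j) = set (D j)"
    and "distinct ((D(i := rotate1 (D i))) j) = distinct (D j)" for j
    by simp_all
  with assms show ?thesis unfolding wf_diagram_iff by (simp only:) simp
qed

lemma passage_loc_eqI:
  assumes wf: "wf_diagram N Cr D" and "j < N" "k < length (D j)" "D j ! k = (c, e)"
  shows "passage_loc N D c e = (j, k)"
proof -
  have "(c, e) \<in> set (D j)" using assms(3,4) by (metis nth_mem)
  then have "\<exists>!jk. fst jk < N \<and> snd jk < length (D (fst jk)) \<and> D (fst jk) ! snd jk = (c, e)"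
    using wf \<open>j < N\<close> unfolding wf_diagram_def by fastforce
  then show ?thesis unfolding passage_loc_def using assms(2-4) by (intro the1_equality) auto
qed

lemma passage_loc_in_diagram:
  assumes wf: "wf_diagram N Cr D" and "c \<in> Cr" "e \<in> {-1, 1}" "passage_loc N D c e = (j, k)"
  shows "j < N \<and> k < length (D j) \<and> D j ! k = (c, e)"
proof -
  have "\<exists>!jk. fst jk < N \<and> snd jk < length (D (fst jk)) \<and> D (fst jk) ! snd jk = (c, e)"
    using wf assms(2,3) unfolding wf_diagram_def by blast
  from theI'[OF this] show ?thesis using assms(4) unfolding passage_loc_def by simp
qed

lemma self_contrib_cong: "set (D' i) = set (D i) \<Longrightarrow> self_contrib D' i = self_contrib D i"
  by (simp add: fun_eq_iff self_contrib_def is_self_def)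

lemma ext_contrib_cong: "set (D' i) = set (D i) \<Longrightarrow> ext_contrib D' i = ext_contrib D i"
  by (simp add: fun_eq_iff ext_contrib_def is_self_def)

lemma bilabel_cong:
  assumes "D' i = D i"
  shows "bilabel D' a i = bilabel D a i"
proof -
  have self_eq: "self_contrib D' i = self_contrib D i" and ext_eq: "ext_contrib D' i = ext_contrib D i"
    using assms by (metis self_contrib_cong ext_contrib_cong)+
  show ?thesis by (rule ext) (simp only: bilabel_def self_eq ext_eq assms)
qed

text \<open>Self passages pair off as (c, e) and (c, -e), whose index changes cancel.\<close>
lemma sum_self_contrib_eq_0:
  fixes D :: "nat \<Rightarrow> ('c \<times> int) list"
  assumes "distinct (D i)"
  shows "sum_list (map (self_contrib D i) (D i)) = 0"
proof -
  define T where "T = {p \<in> set (D i). is_self D i p}"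
  define flip :: "'c \<times> int \<Rightarrow> 'c \<times> int" where "flip p = (fst p, - snd p)" for p
  have "sum_list (map (self_contrib D i) (D i)) = sum snd T"
    using assms by (simp add: sum_list_distinct_conv_sum_set self_contrib_def T_def sum.inter_filter)
  moreover have "sum snd T = sum (snd \<circ> flip) T"
    by (rule sum.reindex_bij_witness[of T flip flip]) (auto simp: T_def flip_def is_self_def)
  then have "sum snd T = 0" by (simp add: flip_def o_def sum_negf)
  ultimately show ?thesis by simp
qed

lemma bilabel_end:
  assumes "distinct (D i)"
  shows "bilabel D a i (length (D i)) = (fst (a i), snd (a i) + comp_weight D i)"
  using sum_self_contrib_eq_0[of D i, OF assms] by (simp add: bilabel_def comp_weight_def)

lemma comp_weight_rotate1: "comp_weight (D(i := rotate1 (D i))) i = comp_weight D i"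
proof -
  have "ext_contrib (D(i := rotate1 (D i))) i = ext_contrib D i" by (rule ext_contrib_cong) simp
  then show ?thesis unfolding comp_weight_def by (cases "D i") simp_all
qed

lemma bilabel_rotate1:
  assumes Di: "D i = p # ps" and ext: "\<not> is_self D i p" and k: "k \<le> length ps"
  shows "bilabel (D(i := rotate1 (D i))) a i k
           = (fst (bilabel D a i (Suc k)), snd (bilabel D a i (Suc k)) - snd p)"
proof -
  let ?D' = "D(i := rotate1 (D i))"
  have "self_contrib ?D' i = self_contrib D i" by (rule self_contrib_cong) simp
  moreover have "ext_contrib ?D' i = ext_contrib D i" by (rule ext_contrib_cong) simp
  moreover have "self_contrib D i p = 0" "ext_contrib D i p = snd p"
    using ext by (simp_all add: self_contrib_def ext_contrib_def)
  ultimately show ?thesis using k by (simp add: bilabel_def Di)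
qed

lemma first_passage_labels_rotate1:
  assumes wf: "wf_diagram N Cr D" and i: "i < N"
    and Di: "D i = (c, \<iota>) # ps" and ext: "\<not> is_self D i (c, \<iota>)"
  defines "D' \<equiv> D(i := rotate1 (D i))"
  shows "lab_abs (in_label N D' a c \<iota>) = lab_abs (in_label N D a c \<iota>) + (comp_weight D i - \<iota>)"
    and "lab_abs (out_label N D' a c \<iota>) = lab_abs (out_label N D a c \<iota>) + (comp_weight D i - \<iota>)"
proof -
  have D'i: "D' i = ps @ [(c, \<iota>)]" by (simp add: D'_def Di)
  have loc: "passage_loc N D c \<iota> = (i, 0)"
    using i Di by (intro passage_loc_eqI[OF wf]) auto
  have loc': "passage_loc N D' c \<iota> = (i, length ps)"
    using i D'i unfolding D'_def by (intro passage_loc_eqI[OF wf_diagram_rotate1[OF wf]]) auto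
  have dist: "distinct (D i)" and dist': "distinct (D' i)"
    using wf_diagram_distinct[OF wf i] by (simp_all add: D'_def)
  have "bilabel D' a i (length ps) = (fst (a i), snd (a i) + comp_weight D i - \<iota>)"
    using bilabel_rotate1[OF Di ext, of "length ps" a] bilabel_end[of D i a, OF dist]
    by (simp add: D'_def Di)
  moreover have "bilabel D' a i (Suc (length ps)) = (fst (a i), snd (a i) + comp_weight D i)"
    using bilabel_end[of D' i a, OF dist'] comp_weight_rotate1[of D i] by (simp add: D'_def Di)
  moreover have "bilabel D a i 1 = (fst (a i), snd (a i) + \<iota>)"
    using ext by (simp add: bilabel_def Di self_contrib_def ext_contrib_def)
  ultimately show "lab_abs (in_label N D' a c \<iota>) = lab_abs (in_label N D a c \<iota>) + (comp_weight D i - \<iota>)"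
    and "lab_abs (out_label N D' a c \<iota>) = lab_abs (out_label N D a c \<iota>) + (comp_weight D i - \<iota>)"
    by (simp_all add: in_label_def out_label_def loc loc' lab_abs_def bilabel_def)
qed

lemma other_passage_labels_rotate1:
  assumes wf: "wf_diagram N Cr D" and "c \<in> Cr" "e \<in> {-1, 1}" and off: "(c, e) \<notin> set (D i)"
  defines "D' \<equiv> D(i := rotate1 (D i))"
  shows "in_label N D' a c e = in_label N D a c e"
    and "out_label N D' a c e = out_label N D a c e"
proof -
  obtain j k where loc: "passage_loc N D c e = (j, k)" by fastforce
  then have jk: "j < N" "k < length (D j)" "D j ! k = (c, e)"
    using passage_loc_in_diagram[OF wf \<open>c \<in> Cr\<close> \<open>e \<in> {-1, 1}\<close>] by auto
  then have "j \<noteq> i" using off by (metis nth_mem)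
  then have "D' j = D j" by (simp add: D'_def)
  then have "passage_loc N D' c e = (j, k)" and "bilabel D' a j = bilabel D a j"
    using jk by (auto simp: D'_def intro: passage_loc_eqI[OF wf_diagram_rotate1[OF wf]] bilabel_cong)
  with loc show "in_label N D' a c e = in_label N D a c e"
    and "out_label N D' a c e = out_label N D a c e"
    by (simp_all add: in_label_def out_label_def)
qed

lemma crossing_weight_shift:
  assumes "\<iota> \<in> {-1, 1}"
    and "lab_abs (in_label N D' a c \<iota>) = lab_abs (in_label N D a c \<iota>) + d"
    and "lab_abs (out_label N D' a c \<iota>) = lab_abs (out_label N D a c \<iota>) + d"
    and "in_label N D' a c (- \<iota>) = in_label N D a c (- \<iota>)"
    and "out_label N D' a c (- \<iota>) = out_label N D a c (- \<iota>)"
  shows "crossing_weight N D' pos a c = crossing_weight N D pos a c + (if is_over pos c \<iota> then d else - d)"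
  using assms by (auto simp: crossing_weight_def is_over_def)

lemma crossing_weight_rotate1:
  assumes wf: "wf_diagram N Cr D" and i: "i < N"
    and Di: "D i = (c, \<iota>) # ps" and ext: "\<not> is_self D i (c, \<iota>)"
  shows "crossing_weight N (D(i := rotate1 (D i))) pos a c
           = crossing_weight N D pos a c
               + (if is_over pos c \<iota> then comp_weight D i - \<iota> else - (comp_weight D i - \<iota>))"
proof -
  have "(c, \<iota>) \<in> set (D i)" by (simp add: Di)
  then have c: "c \<in> Cr" and \<iota>: "\<iota> \<in> {-1, 1}" and "- \<iota> \<in> {-1, 1}"
    using wf i unfolding wf_diagram_def by force+
  have "(c, - \<iota>) \<notin> set (D i)" using ext by (simp add: is_self_def)
  with \<iota> show ?thesis
    by (intro crossing_weight_shift first_passage_labels_rotate1[OF wf i Di ext]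
        other_passage_labels_rotate1[OF wf c \<open>- \<iota> \<in> {-1, 1}\<close>])
qed

theorem lemma1:
  fixes N :: nat and Cr :: "'c set" and D :: "nat \<Rightarrow> ('c \<times> int) list"
    and pos :: "'c \<Rightarrow> bool" and a :: "nat \<Rightarrow> int \<times> int" and i :: nat
  assumes wf: "wf_diagram N Cr D"
    and i: "i < N"
    and ne: "D i \<noteq> []"
    and ext: "\<not> is_self D i (hd (D i))"
  shows "let c = fst (hd (D i)); \<iota> = snd (hd (D i)); n = comp_weight D i;
             D' = D(i := rotate1 (D i)) in
           crossing_weight N D' pos a c =
             crossing_weight N D pos a c + (if is_over pos c \<iota> then n - \<iota> else - (n - \<iota>))
           \<and> (\<forall>k < length (D i). bilabel D' a i k =
                (fst (bilabel D a i (Suc k)), snd (bilabel D a i (Suc k)) - \<iota>))"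
proof -
  obtain c \<iota> ps where Di: "D i = (c, \<iota>) # ps"
    using ne by (cases "D i") auto
  with ext have ext': "\<not> is_self D i (c, \<iota>)" by simp
  have "\<forall>k < length (D i). bilabel (D(i := rotate1 (D i))) a i k
      = (fst (bilabel D a i (Suc k)), snd (bilabel D a i (Suc k)) - \<iota>)"
    using bilabel_rotate1[OF Di ext'] by (simp add: Di less_Suc_eq_le)
  with crossing_weight_rotate1[OF wf i Di ext'] show ?thesis by (simp add: Di Let_def)
qed

end
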